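(* For any symmetric quiver $Q=(I,E)$ and $d\in\mathbb{N}^I$ there exists $\delta\in M(d)^{W_d}_\mathbb{R}$ such that $S^d_\delta=\{d\}$.
   Context: $Q$ symmetric: for all $i,j\in I$, the number of edges $i\to j$ equals that of $j\to i$. $R(d)=\bigoplus_{(i\to j)\in E}\mathrm{Hom}(V^i,V^j)$ ($\dim V^i=d^i$), $G(d)=\prod GL(V^i)$ with Lie algebra $\mathfrak{g}(d)$, diagonal torus $T(d)$ with weights $\beta^i_a$, $M(d)_\mathbb{R}$ its real weight space, $W_d=\prod\mathfrak{S}_{d^i}$. For a cocharacter $\lambda$: $n_\lambda=\langle\lambda,\det(R(d)^\vee)^{\lambda>0}\rangle-\langle\lambda,\det(\mathfrak{g}(d)^\vee)^{\lambda>0}\rangle$. A partition of $d$ is a collection of nonzero $d_1,\dots,d_k\in\mathbb{N}^I$ with sum $d$; $\lambda$ has associated partition $(d_j)$ if the $j$-th distinct value of $\langle\lambda,\beta^i_a\rangle$ occurs $d^i_j$ times for each $i$. $S^d_\delta$ is the set of partitions such that $n_\lambda/2+\langle\lambda,\delta\rangle\in\mathbb{Z}$ for all $\lambda$ with that associated partition; $\{d\}$ is the set consisting of the one-term partition. *)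

theory Defs
  imports Complex_Main
begin

text \<open>Quiver Q = (I,E): vertex type 'v (finite), edge type 'e (finite) with source
  src and target tgt. The weights beta^i_a of T(d)
  are indexed by pairs (i,a) with a < d i (0-based).\<close>

definition wt_idx :: "('v \<Rightarrow> nat) \<Rightarrow> ('v \<times> nat) set" where
  "wt_idx d = {(i,a). a < d i}"

definition symmetric_quiver :: "('e::finite \<Rightarrow> 'v) \<Rightarrow> ('e \<Rightarrow> 'v) \<Rightarrow> bool" where
  "symmetric_quiver src tgt \<longleftrightarrow>
     (\<forall>i j. card {e. src e = i \<and> tgt e = j} = card {e. src e = j \<and> tgt e = i})"

text \<open>Real weight space M(d)_R: real-valued functions on the weight indices (zero outside).\<close>
definition real_weights :: "('v \<Rightarrow> nat) \<Rightarrow> ('v \<times> nat \<Rightarrow> real) set" where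
  "real_weights d = {\<delta>. \<forall>x. x \<notin> wt_idx d \<longrightarrow> \<delta> x = 0}"

text \<open>W_d-invariant part M(d)^{W_d}_R: invariant under permuting the a-index within each i.\<close>
definition inv_real_weights :: "('v \<Rightarrow> nat) \<Rightarrow> ('v \<times> nat \<Rightarrow> real) set" where
  "inv_real_weights d = {\<delta> \<in> real_weights d.
      \<forall>i a b. a < d i \<longrightarrow> b < d i \<longrightarrow> \<delta> (i,a) = \<delta> (i,b)}"

text \<open>Cocharacters of T(d): integer vectors, lambda(i,a) = <lambda, beta^i_a>.\<close>
definition cochars :: "('v \<Rightarrow> nat) \<Rightarrow> ('v \<times> nat \<Rightarrow> int) set" where
  "cochars d = {l. \<forall>x. x \<notin> wt_idx d \<longrightarrow> l x = 0}"

definition pairing :: "('v::finite \<Rightarrow> nat) \<Rightarrow> ('v \<times> nat \<Rightarrow> int) \<Rightarrow> ('v \<times> nat \<Rightarrow> real) \<Rightarrow> real" where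
  "pairing d l \<delta> = (\<Sum>x\<in>wt_idx d. of_int (l x) * \<delta> x)"

definition pos_part :: "int \<Rightarrow> int" where
  "pos_part x = max 0 x"

text \<open>n_lambda = <lambda, det (R(d)^dual)^{lambda>0}> - <lambda, det (g(d)^dual)^{lambda>0}>.
  For an edge e : i -> j, Hom(V^i,V^j)^dual has weights beta^i_a - beta^j_b;
  g(d)^dual has weights beta^i_a - beta^i_b.\<close>
definition n_lambda :: "('e::finite \<Rightarrow> 'v::finite) \<Rightarrow> ('e \<Rightarrow> 'v) \<Rightarrow> ('v \<Rightarrow> nat)
    \<Rightarrow> ('v \<times> nat \<Rightarrow> int) \<Rightarrow> int" where
  "n_lambda src tgt d l =
     (\<Sum>e\<in>UNIV. \<Sum>a<d (src e). \<Sum>b<d (tgt e). pos_part (l (src e, a) - l (tgt e, b)))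
   - (\<Sum>i\<in>UNIV. \<Sum>a<d i. \<Sum>b<d i. pos_part (l (i, a) - l (i, b)))"

definition is_partition :: "('v \<Rightarrow> nat) \<Rightarrow> ('v \<Rightarrow> nat) list \<Rightarrow> bool" where
  "is_partition d P \<longleftrightarrow> (\<forall>q\<in>set P. q \<noteq> (\<lambda>_. 0)) \<and> (\<forall>i. (\<Sum>q\<leftarrow>P. q i) = d i)"

definition assoc_partition :: "('v \<Rightarrow> nat) \<Rightarrow> ('v \<times> nat \<Rightarrow> int) \<Rightarrow> ('v \<Rightarrow> nat) list" where
  "assoc_partition d l =
     map (\<lambda>v i. card {a. a < d i \<and> l (i,a) = v}) (sorted_list_of_set (l ` wt_idx d))"

definition S_set :: "('e::finite \<Rightarrow> 'v::finite) \<Rightarrow> ('e \<Rightarrow> 'v) \<Rightarrow> ('v \<Rightarrow> nat)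
    \<Rightarrow> ('v \<times> nat \<Rightarrow> real) \<Rightarrow> ('v \<Rightarrow> nat) list set" where
  "S_set src tgt d \<delta> = {P. is_partition d P \<and>
      (\<forall>l\<in>cochars d. assoc_partition d l = P \<longrightarrow>
          real_of_int (n_lambda src tgt d l) / 2 + pairing d l \<delta> \<in> \<int>)}"

end

theory Submission
  imports Defs
begin

(* Modulo 2, n_lambda is linear in lambda.  Indeed pos(x) + pos(-x) = |x| is congruent to x,
  and since the quiver is symmetric the edges i -> j and j -> i pair up, which gives
  n_lambda = sum_i w_i s_i (mod 2) with s_i = sum_a lambda(i,a) and
  w_i = sum_j m_ij d^j - m_ii - d^i + 1 (m_ij the number of edges i -> j).
  For delta(i,a) = - w_i / 2 + 1 / N, where N = sum_i d^i, the condition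
  n_lambda / 2 + <lambda, delta> in Z therefore says exactly that N divides sum_(i,a) lambda(i,a).
  A constant lambda satisfies this, so {d} is in S.  For a partition with at least two parts,
  lowering the values on the first part by one keeps the associated partition but changes
  the total weight by the size of that part, a number strictly between 0 and N. *)

lemma even_offdiag_sum:
  fixes g :: "'a \<Rightarrow> 'a \<Rightarrow> 'b::ring_parity"
  assumes "finite S" and "\<And>i j. i \<in> S \<Longrightarrow> j \<in> S \<Longrightarrow> even (g i j + g j i)"
  shows "even ((\<Sum>i\<in>S. \<Sum>j\<in>S. g i j) - (\<Sum>i\<in>S. g i i))"
  using assms
proof (induction S rule: finite_induct)
  case empty
  then show ?case by simp
next
  case (insert x S)
  have split: "(\<Sum>i\<in>insert x S. \<Sum>j\<in>insert x S. g i j) - (\<Sum>i\<in>insert x S. g i i)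
     = ((\<Sum>i\<in>S. \<Sum>j\<in>S. g i j) - (\<Sum>i\<in>S. g i i)) + (\<Sum>j\<in>S. g x j + g j x)"
    using insert(1,2) by (simp add: sum.distrib algebra_simps)
  have "even ((\<Sum>i\<in>S. \<Sum>j\<in>S. g i j) - (\<Sum>i\<in>S. g i i))"
    using insert.IH insert.prems by simp
  moreover have "even (\<Sum>j\<in>S. g x j + g j x)"
    using insert.prems by (intro dvd_sum) auto
  ultimately show ?case
    unfolding split by (rule dvd_add)
qed

lemma pos_part_add_pos_part_uminus: "pos_part x + pos_part (- x) = \<bar>x\<bar>"
  by (simp add: pos_part_def)

lemma even_pos_part_pair: "even (pos_part (x - y) + pos_part (y - x) - (x + y))"
proof -
  have "pos_part (x - y) + pos_part (y - x) - (x + y) = \<bar>x - y\<bar> - (x - y) - 2 * y"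
    using pos_part_add_pos_part_uminus[of "x - y"] by simp
  then show ?thesis
    by simp
qed

definition pos_block :: "('v \<Rightarrow> nat) \<Rightarrow> ('v \<times> nat \<Rightarrow> int) \<Rightarrow> 'v \<Rightarrow> 'v \<Rightarrow> int" where
  "pos_block d l i j = (\<Sum>a<d i. \<Sum>b<d j. pos_part (l (i, a) - l (j, b)))"

definition weight_sum :: "('v \<Rightarrow> nat) \<Rightarrow> ('v \<times> nat \<Rightarrow> int) \<Rightarrow> 'v \<Rightarrow> int" where
  "weight_sum d l i = (\<Sum>a<d i. l (i, a))"

lemma even_pos_block_swap:
  "even (pos_block d l i j + pos_block d l j i - (int (d j) * weight_sum d l i + int (d i) * weight_sum d l j))"
proof -
  have "pos_block d l i j + pos_block d l j i - (int (d j) * weight_sum d l i + int (d i) * weight_sum d l j)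
     = (\<Sum>a<d i. \<Sum>b<d j. pos_part (l (i, a) - l (j, b)) + pos_part (l (j, b) - l (i, a)) - (l (i, a) + l (j, b)))"
    unfolding pos_block_def weight_sum_def
    by (subst (2) sum.swap) (simp add: sum.distrib sum_subtractf sum_distrib_left mult.commute)
  also have "even \<dots>"
    by (intro dvd_sum even_pos_part_pair)
  finally show ?thesis .
qed

lemma even_pos_block_diag: "even (pos_block d l i i - (int (d i) - 1) * weight_sum d l i)"
proof -
  have row: "(\<Sum>a<d i. \<Sum>b<d i. pos_part (l (i, a) - l (i, b)) - l (i, a))
      = pos_block d l i i - int (d i) * weight_sum d l i"
    by (simp add: pos_block_def weight_sum_def sum_subtractf sum_distrib_left mult.commute)
  have diag: "(\<Sum>a<d i. pos_part (l (i, a) - l (i, a)) - l (i, a)) = - weight_sum d l i"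
    by (simp add: weight_sum_def pos_part_def sum_negf)
  have "pos_block d l i i - (int (d i) - 1) * weight_sum d l i
      = (pos_block d l i i - int (d i) * weight_sum d l i) - - weight_sum d l i"
    by (simp add: algebra_simps)
  also have "\<dots> = (\<Sum>a<d i. \<Sum>b<d i. pos_part (l (i, a) - l (i, b)) - l (i, a))
      - (\<Sum>a<d i. pos_part (l (i, a) - l (i, a)) - l (i, a))"
    by (simp only: row diag)
  also have "even \<dots>"
    by (rule even_offdiag_sum) (use even_pos_part_pair in \<open>simp_all add: algebra_simps\<close>)
  finally show ?thesis .
qed

definition edge_count :: "('e \<Rightarrow> 'v) \<Rightarrow> ('e \<Rightarrow> 'v) \<Rightarrow> 'v \<Rightarrow> 'v \<Rightarrow> int" where
  "edge_count src tgt i j = int (card {e. src e = i \<and> tgt e = j})"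

lemma edge_count_sym:
  "symmetric_quiver src tgt \<Longrightarrow> edge_count src tgt j i = edge_count src tgt i j"
  unfolding symmetric_quiver_def edge_count_def by metis

lemma sum_over_edges:
  fixes src tgt :: "'e::finite \<Rightarrow> 'v::finite" and g :: "'v \<Rightarrow> 'v \<Rightarrow> int"
  shows "(\<Sum>e\<in>UNIV. g (src e) (tgt e)) = (\<Sum>i\<in>UNIV. \<Sum>j\<in>UNIV. edge_count src tgt i j * g i j)"
proof -
  have "(\<Sum>e\<in>UNIV. g (src e) (tgt e))
      = (\<Sum>p\<in>UNIV. \<Sum>e\<in>{e\<in>UNIV. (src e, tgt e) = p}. g (src e) (tgt e))"
    by (rule sum.group[symmetric]) auto
  also have "\<dots> = (\<Sum>(i, j)\<in>UNIV. edge_count src tgt i j * g i j)"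
    by (intro sum.cong) (auto simp: edge_count_def split: prod.split)
  finally show ?thesis
    by (simp add: sum.cartesian_product)
qed

definition n_lambda_coeff ::
    "('e::finite \<Rightarrow> 'v::finite) \<Rightarrow> ('e \<Rightarrow> 'v) \<Rightarrow> ('v \<Rightarrow> nat) \<Rightarrow> 'v \<Rightarrow> int"
  where
  "n_lambda_coeff src tgt d i =
     (\<Sum>j\<in>UNIV. edge_count src tgt i j * int (d j)) - edge_count src tgt i i - int (d i) + 1"

lemma n_lambda_parity:
  fixes src tgt :: "'e::finite \<Rightarrow> 'v::finite"
  assumes "symmetric_quiver src tgt"
  shows "even (n_lambda src tgt d l - (\<Sum>i\<in>UNIV. n_lambda_coeff src tgt d i * weight_sum d l i))"
proof -
  let ?m = "edge_count src tgt" and ?F = "pos_block d l" and ?s = "weight_sum d l"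
  have edges: "(\<Sum>e\<in>UNIV. \<Sum>a<d (src e). \<Sum>b<d (tgt e). pos_part (l (src e, a) - l (tgt e, b)))
      = (\<Sum>i\<in>UNIV. \<Sum>j\<in>UNIV. ?m i j * ?F i j)"
    using sum_over_edges[of ?F src tgt] by (simp add: pos_block_def)
  have offdiag: "even ((\<Sum>i\<in>UNIV. \<Sum>j\<in>UNIV. ?m i j * (?F i j - int (d j) * ?s i))
      - (\<Sum>i\<in>UNIV. ?m i i * (?F i i - int (d i) * ?s i)))"
  proof (rule even_offdiag_sum)
    fix i j
    have "?m i j * (?F i j - int (d j) * ?s i) + ?m j i * (?F j i - int (d i) * ?s j)
        = ?m i j * (?F i j + ?F j i - (int (d j) * ?s i + int (d i) * ?s j))"
      using edge_count_sym[OF assms, of i j] by (simp add: algebra_simps)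
    then show "even (?m i j * (?F i j - int (d j) * ?s i) + ?m j i * (?F j i - int (d i) * ?s j))"
      using even_pos_block_swap[of d l i j] by simp
  qed simp
  have loops: "even (\<Sum>i\<in>UNIV. ?m i i * (?F i i - (int (d i) - 1) * ?s i))"
    by (intro dvd_sum dvd_mult even_pos_block_diag)
  have diag: "even (\<Sum>i\<in>UNIV. ?F i i - (int (d i) - 1) * ?s i)"
    by (intro dvd_sum even_pos_block_diag)
  have "n_lambda src tgt d l - (\<Sum>i\<in>UNIV. n_lambda_coeff src tgt d i * ?s i)
     = ((\<Sum>i\<in>UNIV. \<Sum>j\<in>UNIV. ?m i j * (?F i j - int (d j) * ?s i))
         - (\<Sum>i\<in>UNIV. ?m i i * (?F i i - int (d i) * ?s i)))
       + (\<Sum>i\<in>UNIV. ?m i i * (?F i i - (int (d i) - 1) * ?s i))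
       - (\<Sum>i\<in>UNIV. ?F i i - (int (d i) - 1) * ?s i)"
    unfolding n_lambda_def edges n_lambda_coeff_def
    by (simp add: pos_block_def sum.distrib sum_subtractf sum_distrib_left sum_distrib_right
        algebra_simps)
  also have "even \<dots>"
    using offdiag loops diag by simp
  finally show ?thesis .
qed

definition total_dim :: "('v::finite \<Rightarrow> nat) \<Rightarrow> nat" where
  "total_dim d = (\<Sum>i\<in>UNIV. d i)"

lemma total_dim_pos: "d \<noteq> (\<lambda>_. 0) \<Longrightarrow> total_dim d > 0"
  by (auto simp: total_dim_def)

lemma total_dim_sum_list: "total_dim (\<lambda>i. \<Sum>q\<leftarrow>P. q i) = (\<Sum>q\<leftarrow>P. total_dim q)"
  by (induction P) (simp_all add: total_dim_def sum.distrib)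

lemma wt_idx_Sigma: "wt_idx d = (SIGMA i:UNIV. {..<d i})"
  by (auto simp: wt_idx_def)

lemma sum_wt_idx:
  fixes d :: "'v::finite \<Rightarrow> nat"
  shows "(\<Sum>x\<in>wt_idx d. f x) = (\<Sum>i\<in>UNIV. \<Sum>a<d i. f (i, a))"
  unfolding wt_idx_Sigma by (subst sum.Sigma) auto

lemma sum_const_wt_idx: "(\<Sum>x\<in>wt_idx d. c) = int (total_dim d) * (c::int)"
  unfolding sum_wt_idx by (simp add: total_dim_def sum_distrib_right)

lemma sum_list_concat: "sum_list (concat xss) = sum_list (map sum_list xss)"
  by (induction xss) simp_all

lemma sum_list_map_upt_0: "sum_list (map f [0..<n]) = (\<Sum>k<n. f k)"
  by (simp add: interv_sum_list_conv_sum_set_nat atLeast0LessThan)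

definition stacked_values :: "('v \<Rightarrow> nat) list \<Rightarrow> (nat \<Rightarrow> int) \<Rightarrow> 'v \<Rightarrow> int list" where
  "stacked_values P \<phi> i = concat (map (\<lambda>j. replicate ((P ! j) i) (\<phi> j)) [0..<length P])"

lemma length_stacked_values: "length (stacked_values P \<phi> i) = (\<Sum>q\<leftarrow>P. q i)"
proof -
  have "length (stacked_values P \<phi> i) = (\<Sum>j\<leftarrow>[0..<length P]. (P ! j) i)"
    by (simp add: stacked_values_def length_concat o_def)
  also have "\<dots> = (\<Sum>q\<leftarrow>P. q i)"
    by (subst (2) map_nth[symmetric]) (simp add: o_def)
  finally show ?thesis .
qed

lemma sum_list_stacked_values:
  "sum_list (stacked_values P \<phi> i) = (\<Sum>j<length P. int ((P ! j) i) * \<phi> j)"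
  by (simp add: stacked_values_def sum_list_concat o_def sum_list_map_upt_0 sum_list_replicate)

lemma count_stacked_values:
  assumes "inj \<phi>" and "j < length P"
  shows "length (filter ((=) (\<phi> j)) (stacked_values P \<phi> i)) = (P ! j) i"
proof -
  have "length (filter ((=) (\<phi> j)) (stacked_values P \<phi> i))
      = (\<Sum>k<length P. if \<phi> j = \<phi> k then (P ! k) i else 0)"
    by (auto simp: stacked_values_def filter_concat length_concat o_def filter_replicate
        sum_list_map_upt_0 intro!: sum.cong)
  also have "\<dots> = (\<Sum>k<length P. if k = j then (P ! k) i else 0)"
    using assms(1) by (intro sum.cong) (auto dest: injD)
  finally show ?thesis
    using assms(2) by simp
qed

lemma set_stacked_values:
  "set (stacked_values P \<phi> i) = \<phi> ` {j. j < length P \<and> (P ! j) i \<noteq> 0}"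
  by (auto simp: stacked_values_def)

lemma sorted_list_of_set_image_strict_mono:
  fixes \<phi> :: "nat \<Rightarrow> 'a::linorder"
  assumes "strict_mono \<phi>"
  shows "sorted_list_of_set (\<phi> ` {..<n}) = map \<phi> [0..<n]"
proof (rule sorted_distinct_set_unique)
  show "sorted (map \<phi> [0..<n])"
    unfolding sorted_map
    by (rule sorted_wrt_mono_rel[OF _ sorted_wrt_upt]) (use assms in \<open>simp add: strict_mono_less_eq\<close>)
  show "distinct (map \<phi> [0..<n])"
    using strict_mono_imp_inj_on[OF assms] by (simp add: distinct_map inj_on_def)
qed (auto simp: atLeast0LessThan)

definition stacked_cochar ::
    "('v \<Rightarrow> nat) \<Rightarrow> ('v \<Rightarrow> nat) list \<Rightarrow> (nat \<Rightarrow> int) \<Rightarrow> 'v \<times> nat \<Rightarrow> int"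
  where
  "stacked_cochar d P \<phi> = (\<lambda>(i, a). if a < d i then stacked_values P \<phi> i ! a else 0)"

lemma stacked_cochar_in_cochars: "stacked_cochar d P \<phi> \<in> cochars d"
  by (auto simp: cochars_def stacked_cochar_def wt_idx_def)

lemma length_stacked_values_partition:
  "is_partition d P \<Longrightarrow> length (stacked_values P \<phi> i) = d i"
  by (simp add: length_stacked_values is_partition_def)

lemma image_stacked_cochar:
  assumes "is_partition d P"
  shows "stacked_cochar d P \<phi> ` wt_idx d = \<phi> ` {..<length P}"
proof -
  have "stacked_cochar d P \<phi> ` wt_idx d = (\<Union>i. set (stacked_values P \<phi> i))"
    using length_stacked_values_partition[OF assms]
    by (force simp: stacked_cochar_def wt_idx_def in_set_conv_nth)
  also have "\<dots> = \<phi> ` {j. j < length P \<and> (\<exists>i. (P ! j) i \<noteq> 0)}"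
    unfolding set_stacked_values by blast
  also have "{j. j < length P \<and> (\<exists>i. (P ! j) i \<noteq> 0)} = {..<length P}"
  proof -
    have "\<exists>i. (P ! j) i \<noteq> 0" if "j < length P" for j
      using assms nth_mem[OF that] by (auto simp: is_partition_def fun_eq_iff)
    then show ?thesis
      by auto
  qed
  finally show ?thesis .
qed

lemma assoc_partition_stacked_cochar:
  assumes "is_partition d P" and "strict_mono \<phi>"
  shows "assoc_partition d (stacked_cochar d P \<phi>) = P"
proof -
  have "card {a. a < d i \<and> stacked_cochar d P \<phi> (i, a) = \<phi> j} = (P ! j) i"
    if "j < length P" for i j
  proof -
    have "{a. a < d i \<and> stacked_cochar d P \<phi> (i, a) = \<phi> j}
        = {a. a < length (stacked_values P \<phi> i) \<and> stacked_values P \<phi> i ! a = \<phi> j}"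
      using length_stacked_values_partition[OF assms(1)] by (auto simp: stacked_cochar_def)
    then show ?thesis
      using count_stacked_values[OF strict_mono_imp_inj_on[OF assms(2)] that]
      by (simp add: length_filter_conv_card eq_commute)
  qed
  then have "map (\<lambda>v i. card {a. a < d i \<and> stacked_cochar d P \<phi> (i, a) = v}) (map \<phi> [0..<length P])
      = map (\<lambda>j. P ! j) [0..<length P]"
    by auto
  then show ?thesis
    by (simp add: assoc_partition_def image_stacked_cochar[OF assms(1)]
        sorted_list_of_set_image_strict_mono[OF assms(2)] map_nth)
qed

lemma sum_stacked_cochar:
  fixes d :: "'v::finite \<Rightarrow> nat"
  assumes "is_partition d P"
  shows "(\<Sum>x\<in>wt_idx d. stacked_cochar d P \<phi> x) = (\<Sum>j<length P. \<phi> j * int (total_dim (P ! j)))"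
proof -
  have "(\<Sum>x\<in>wt_idx d. stacked_cochar d P \<phi> x) = (\<Sum>i\<in>UNIV. sum_list (stacked_values P \<phi> i))"
    using length_stacked_values_partition[OF assms]
    by (simp add: sum_wt_idx stacked_cochar_def sum_list_sum_nth atLeast0LessThan)
  also have "\<dots> = (\<Sum>j<length P. \<phi> j * int (total_dim (P ! j)))"
    unfolding sum_list_stacked_values total_dim_def
    by (subst sum.swap) (simp add: sum_distrib_left mult.commute)
  finally show ?thesis .
qed

definition balancing_weight ::
    "('e::finite \<Rightarrow> 'v::finite) \<Rightarrow> ('e \<Rightarrow> 'v) \<Rightarrow> ('v \<Rightarrow> nat) \<Rightarrow> 'v \<times> nat \<Rightarrow> real"
  where
  "balancing_weight src tgt d = (\<lambda>(i, a).
     if a < d i then - of_int (n_lambda_coeff src tgt d i) / 2 + 1 / real (total_dim d) else 0)"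

lemma balancing_weight_in_inv_real_weights: "balancing_weight src tgt d \<in> inv_real_weights d"
  by (auto simp: inv_real_weights_def real_weights_def wt_idx_def balancing_weight_def)

lemma pairing_balancing_weight:
  fixes src tgt :: "'e::finite \<Rightarrow> 'v::finite"
  shows "pairing d l (balancing_weight src tgt d)
    = - of_int (\<Sum>i\<in>UNIV. n_lambda_coeff src tgt d i * weight_sum d l i) / 2
      + of_int (\<Sum>x\<in>wt_idx d. l x) / real (total_dim d)"
  by (simp add: pairing_def sum_wt_idx balancing_weight_def weight_sum_def distrib_left
      sum.distrib sum_distrib_left sum_distrib_right sum_divide_distrib sum_negf sum_subtractf
      algebra_simps)

lemma integral_iff_total_dim_dvd:
  fixes src tgt :: "'e::finite \<Rightarrow> 'v::finite"
  assumes "symmetric_quiver src tgt" and "total_dim d > 0"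
  shows "of_int (n_lambda src tgt d l) / 2 + pairing d l (balancing_weight src tgt d) \<in> \<int>
    \<longleftrightarrow> int (total_dim d) dvd (\<Sum>x\<in>wt_idx d. l x)"
proof -
  obtain k where "n_lambda src tgt d l - (\<Sum>i\<in>UNIV. n_lambda_coeff src tgt d i * weight_sum d l i) = 2 * k"
    using n_lambda_parity[OF assms(1), of d l] by (rule dvdE)
  then have k: "n_lambda src tgt d l = (\<Sum>i\<in>UNIV. n_lambda_coeff src tgt d i * weight_sum d l i) + 2 * k"
    by simp
  have "of_int (n_lambda src tgt d l) / 2 + pairing d l (balancing_weight src tgt d)
      = of_int k + of_int (\<Sum>x\<in>wt_idx d. l x) / of_int (int (total_dim d))"
    by (simp add: k pairing_balancing_weight add_divide_distrib)
  moreover have "of_int (\<Sum>x\<in>wt_idx d. l x) / of_int (int (total_dim d)) \<in> (\<int> :: real set)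
      \<longleftrightarrow> int (total_dim d) dvd (\<Sum>x\<in>wt_idx d. l x)"
    using assms(2) by (simp only: of_int_div_of_int_in_Ints_iff) simp
  ultimately show ?thesis
    by simp
qed

lemma is_partition_single: "d \<noteq> (\<lambda>_. 0) \<Longrightarrow> is_partition d [d]"
  by (simp add: is_partition_def)

lemma is_partition_length_le_1:
  assumes "is_partition d P" and "length P \<le> 1" and "d \<noteq> (\<lambda>_. 0)"
  shows "P = [d]"
proof (cases P)
  case Nil
  then show ?thesis
    using assms(1,3) by (auto simp: is_partition_def)
next
  case (Cons q rest)
  then have "P = [q]"
    using assms(2) by simp
  then show ?thesis
    using assms(1) by (auto simp: is_partition_def)
qed

lemma total_dim_first_part:
  assumes "is_partition d P" and "2 \<le> length P"
  shows "0 < total_dim (P ! 0)" and "total_dim (P ! 0) < total_dim d"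
proof -
  obtain q0 q1 rest where P: "P = q0 # q1 # rest"
    using assms(2) by (metis One_nat_def Suc_1 Suc_le_length_iff)
  have nonzero: "q0 \<noteq> (\<lambda>_. 0)" "q1 \<noteq> (\<lambda>_. 0)"
    using assms(1) by (auto simp: is_partition_def P)
  have "d = (\<lambda>i. \<Sum>q\<leftarrow>P. q i)"
    using assms(1) by (simp add: is_partition_def fun_eq_iff)
  then have "total_dim d = (\<Sum>q\<leftarrow>P. total_dim q)"
    by (simp only: total_dim_sum_list)
  then have "total_dim d = total_dim q0 + total_dim q1 + (\<Sum>q\<leftarrow>rest. total_dim q)"
    by (simp add: P)
  then show "0 < total_dim (P ! 0)" and "total_dim (P ! 0) < total_dim d"
    using total_dim_pos[OF nonzero(1)] total_dim_pos[OF nonzero(2)] by (simp_all add: P)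
qed

lemma assoc_partition_single_const:
  assumes "assoc_partition d l = [q]"
  obtains v where "\<And>x. x \<in> wt_idx d \<Longrightarrow> l x = v"
proof -
  have "card (l ` wt_idx d) = 1"
    using arg_cong[OF assms, of length] by (simp add: assoc_partition_def)
  then obtain v where "l ` wt_idx d = {v}"
    by (rule card_1_singletonE)
  then show ?thesis
    using that by blast
qed

lemma single_part_mem_S_set:
  fixes src tgt :: "'e::finite \<Rightarrow> 'v::finite"
  assumes "symmetric_quiver src tgt" and "d \<noteq> (\<lambda>_. 0)"
  shows "[d] \<in> S_set src tgt d (balancing_weight src tgt d)"
proof -
  have "int (total_dim d) dvd (\<Sum>x\<in>wt_idx d. l x)" if single: "assoc_partition d l = [d]" for l
  proof -
    obtain v where "\<And>x. x \<in> wt_idx d \<Longrightarrow> l x = v"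
      using assoc_partition_single_const[OF single] by blast
    then have "(\<Sum>x\<in>wt_idx d. l x) = (\<Sum>x\<in>wt_idx d. v)"
      by (intro sum.cong) auto
    also have "\<dots> = int (total_dim d) * v"
      by (rule sum_const_wt_idx)
    finally show ?thesis
      by simp
  qed
  then show ?thesis
    using integral_iff_total_dim_dvd[OF assms(1) total_dim_pos[OF assms(2)]]
      is_partition_single[OF assms(2)]
    by (auto simp: S_set_def)
qed

lemma mem_S_set_balancing_weight:
  fixes src tgt :: "'e::finite \<Rightarrow> 'v::finite"
  assumes "symmetric_quiver src tgt" and "d \<noteq> (\<lambda>_. 0)"
    and "P \<in> S_set src tgt d (balancing_weight src tgt d)"
  shows "P = [d]"
proof (rule ccontr)
  assume "P \<noteq> [d]"
  have part: "is_partition d P"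
    using assms(3) by (simp add: S_set_def)
  then have long: "2 \<le> length P"
    using is_partition_length_le_1 \<open>P \<noteq> [d]\<close> assms(2) by fastforce
  have dvd: "int (total_dim d) dvd (\<Sum>j<length P. \<phi> j * int (total_dim (P ! j)))"
    if "strict_mono \<phi>" for \<phi>
    using assms(3) integral_iff_total_dim_dvd[OF assms(1) total_dim_pos[OF assms(2)]]
      stacked_cochar_in_cochars[of d P \<phi>] assoc_partition_stacked_cochar[OF part that]
    by (auto simp: S_set_def sum_stacked_cochar[OF part, symmetric])
  define \<phi> :: "nat \<Rightarrow> int" where "\<phi> j = (if j = 0 then -1 else int j)" for j
  have "strict_mono \<phi>" and "strict_mono int"
    by (auto simp: strict_mono_def \<phi>_def)
  then have "int (total_dim d) dvd
      (\<Sum>j<length P. int j * int (total_dim (P ! j))) - (\<Sum>j<length P. \<phi> j * int (total_dim (P ! j)))"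
    using dvd by (blast intro: dvd_diff)
  also have "\<dots> = (\<Sum>j<length P. (int j - \<phi> j) * int (total_dim (P ! j)))"
    by (simp add: sum_subtractf left_diff_distrib)
  also have "\<dots> = (\<Sum>j<length P. if j = 0 then int (total_dim (P ! j)) else 0)"
    by (intro sum.cong) (auto simp: \<phi>_def)
  also have "\<dots> = int (total_dim (P ! 0))"
    using long by auto
  finally have "total_dim d dvd total_dim (P ! 0)"
    by simp
  then show False
    using total_dim_first_part[OF part long] by (simp add: nat_dvd_not_less)
qed

theorem proposition8p8:
  fixes src tgt :: "'e::finite \<Rightarrow> 'v::finite" and d :: "'v \<Rightarrow> nat"
  assumes "symmetric_quiver src tgt"
    and "d \<noteq> (\<lambda>_. 0)"
  shows "\<exists>\<delta>\<in>inv_real_weights d. S_set src tgt d \<delta> = {[d]}"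
proof
  show "balancing_weight src tgt d \<in> inv_real_weights d"
    by (rule balancing_weight_in_inv_real_weights)
  show "S_set src tgt d (balancing_weight src tgt d) = {[d]}"
    using single_part_mem_S_set[OF assms] mem_S_set_balancing_weight[OF assms] by blast
qed

end
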